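(* With the setting in the context, the Hamiltonian $H=-\sum_n\sum_{x\in K_n}A_x^0-\sum_n\sum_{y\in K_n}B_y^0$ satisfies $HA_x^r=A_x^rH$ for all $n$, all $x\in K_n$ and all $r\in\widehat G_{n+1}$, and $HB_y^g=B_y^gH$ for all $m$, all $y\in K_m$ and all $g\in G_{m-1}$.
   Context: $(C_\bullet,\partial^C_\bullet)$ is a chain complex with each $C_n$ free abelian on a finite set $K_n$, $K_n\ne\emptyset$ for finitely many $n$; $(G_\bullet,\partial^G_\bullet)$ is a chain complex of finite abelian groups, $\widehat{G}_k=\mathrm{Hom}(G_k,U(1))$. $\mathrm{hom}(C,G)^p=\prod_n\mathrm{Hom}(C_n,G_{n-p})$ with $(\delta^pf)_n=f_{n-1}\partial^C_n-(-1)^p\partial^G_{n-p}f_n$. $\mathrm{hom}(C,G)_p=\mathrm{Hom}(\mathrm{hom}(C,G)^p,U(1))$ (written additively), $\chi_m(f)=m(f)$, $\delta_1m=m\circ\delta^0$. $\mathcal H=\bigotimes_n\bigotimes_{x\in K_n}\mathbb C[G_n]$ with orthonormal basis $|f\rangle$, $f\in\mathrm{hom}(C,G)^0$; $P_t|f\rangle=|f+t\rangle$, $Q_m|f\rangle=\chi_m(f)|f\rangle$; $A_t=P_{\delta^{-1}t}$ ($t\in\mathrm{hom}(C,G)^{-1}$), $B_m=Q_{\delta_1m}$ ($m\in\mathrm{hom}(C,G)_1$). For $x\in K_n$, $g\in G_{n-p}$, $gx^*\in\mathrm{hom}(C,G)^p$ has $n$-th component sending $x\mapsto g$ and other elements of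 $K_n$ to $0$, other components $0$; for $r\in\widehat G_{n-p}$, $rx_*(f)=r(f_n(x))$. For $x\in K_n$: $A_x^r=\frac1{|G_{n+1}|}\sum_{h\in G_{n+1}}r(h)A_{hx^*}$ ($r\in\widehat G_{n+1}$), $B_x^g=\frac1{|G_{n-1}|}\sum_{\rho\in\widehat G_{n-1}}\rho(g)B_{\rho x_*}$ ($g\in G_{n-1}$); superscript $0$ denotes the trivial character, resp. the zero element. *)

theory Defs
  imports Complex_Main
begin

definition zmul :: "int \<Rightarrow> 'g::ab_group_add \<Rightarrow> 'g" where
  "zmul k a = (if 0 \<le> k then (\<Sum>i<nat k. a) else - (\<Sum>i<nat (-k). a))"

text \<open>Chain complex C with C_n free abelian on the finite set K n; the boundary
  is given on basis elements: d^C_n(x) = sum over y in K(n-1) of dC n x y times y.\<close>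
definition free_chain_complex :: "(int \<Rightarrow> 'k set) \<Rightarrow> (int \<Rightarrow> 'k \<Rightarrow> 'k \<Rightarrow> int) \<Rightarrow> bool" where
  "free_chain_complex K dC \<longleftrightarrow>
     (\<forall>n. finite (K n)) \<and> finite {n. K n \<noteq> {}} \<and>
     (\<forall>n x z. x \<in> K n \<longrightarrow> z \<in> K (n - 2) \<longrightarrow>
        (\<Sum>y\<in>K (n - 1). dC n x y * dC (n - 1) y z) = 0)"

definition finite_chain_complex :: "(int \<Rightarrow> 'g::ab_group_add set) \<Rightarrow> (int \<Rightarrow> 'g \<Rightarrow> 'g) \<Rightarrow> bool" where
  "finite_chain_complex G dG \<longleftrightarrow>
     (\<forall>n. finite (G n) \<and> 0 \<in> G n \<and> (\<forall>a\<in>G n. \<forall>b\<in>G n. a + b \<in> G n \<and> - a \<in> G n)) \<and>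
     (\<forall>n. \<forall>a\<in>G n. dG n a \<in> G (n - 1)) \<and>
     (\<forall>n. \<forall>a\<in>G n. \<forall>b\<in>G n. dG n (a + b) = dG n a + dG n b) \<and>
     (\<forall>n. \<forall>a\<in>G n. dG (n - 1) (dG n a) = 0)"

text \<open>hom(C,G)^p: f n is the restriction to the basis K n of a homomorphism C_n \<rightarrow> G_{n-p}.\<close>
definition cochains :: "(int \<Rightarrow> 'k set) \<Rightarrow> (int \<Rightarrow> 'g::ab_group_add set) \<Rightarrow> int \<Rightarrow> (int \<Rightarrow> 'k \<Rightarrow> 'g) set" where
  "cochains K G p = {f. \<forall>n x. (x \<in> K n \<longrightarrow> f n x \<in> G (n - p)) \<and> (x \<notin> K n \<longrightarrow> f n x = 0)}"

text \<open>(delta^p f)_n = f_{n-1} d^C_n - (-1)^p d^G_{n-p} f_n\<close>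
definition cobound :: "(int \<Rightarrow> 'k set) \<Rightarrow> (int \<Rightarrow> 'k \<Rightarrow> 'k \<Rightarrow> int) \<Rightarrow> (int \<Rightarrow> 'g::ab_group_add \<Rightarrow> 'g)
     \<Rightarrow> int \<Rightarrow> (int \<Rightarrow> 'k \<Rightarrow> 'g) \<Rightarrow> (int \<Rightarrow> 'k \<Rightarrow> 'g)" where
  "cobound K dC dG p f = (\<lambda>n x. if x \<in> K n then
      (\<Sum>y\<in>K (n - 1). zmul (dC n x y) (f (n - 1) y))
      - (if even p then dG (n - p) (f n x) else - dG (n - p) (f n x))
    else 0)"

definition chars :: "(int \<Rightarrow> 'g::ab_group_add set) \<Rightarrow> int \<Rightarrow> ('g \<Rightarrow> complex) set" where
  "chars G k = {\<chi>. (\<forall>a\<in>G k. \<forall>b\<in>G k. \<chi> (a + b) = \<chi> a * \<chi> b) \<and>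
                    (\<forall>a\<in>G k. cmod (\<chi> a) = 1) \<and> (\<forall>a. a \<notin> G k \<longrightarrow> \<chi> a = 1)}"

text \<open>The Hilbert space: complex functions on the basis hom(C,G)^0.\<close>
definition hilb :: "(int \<Rightarrow> 'k set) \<Rightarrow> (int \<Rightarrow> 'g::ab_group_add set) \<Rightarrow> ((int \<Rightarrow> 'k \<Rightarrow> 'g) \<Rightarrow> complex) set" where
  "hilb K G = {\<psi>. \<forall>f. f \<notin> cochains K G 0 \<longrightarrow> \<psi> f = 0}"

text \<open>P_t |f> = |f+t>, i.e. (P_t psi)(f) = psi(f - t).\<close>
definition Pop :: "(int \<Rightarrow> 'k set) \<Rightarrow> (int \<Rightarrow> 'g::ab_group_add set) \<Rightarrow> (int \<Rightarrow> 'k \<Rightarrow> 'g)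
     \<Rightarrow> ((int \<Rightarrow> 'k \<Rightarrow> 'g) \<Rightarrow> complex) \<Rightarrow> ((int \<Rightarrow> 'k \<Rightarrow> 'g) \<Rightarrow> complex)" where
  "Pop K G t \<psi> = (\<lambda>f. if f \<in> cochains K G 0 then \<psi> (\<lambda>n x. f n x - t n x) else 0)"

definition Qop :: "(int \<Rightarrow> 'k set) \<Rightarrow> (int \<Rightarrow> 'g::ab_group_add set) \<Rightarrow> ((int \<Rightarrow> 'k \<Rightarrow> 'g) \<Rightarrow> complex)
     \<Rightarrow> ((int \<Rightarrow> 'k \<Rightarrow> 'g) \<Rightarrow> complex) \<Rightarrow> ((int \<Rightarrow> 'k \<Rightarrow> 'g) \<Rightarrow> complex)" where
  "Qop K G m \<psi> = (\<lambda>f. if f \<in> cochains K G 0 then m f * \<psi> f else 0)"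

definition Aop where
  "Aop K G dC dG t = Pop K G (cobound K dC dG (-1) t)"

definition Bop where
  "Bop K G dC dG m = Qop K G (\<lambda>f. m (cobound K dC dG 0 f))"

definition dstar :: "int \<Rightarrow> 'k \<Rightarrow> 'g::ab_group_add \<Rightarrow> (int \<Rightarrow> 'k \<Rightarrow> 'g)" where
  "dstar n x g = (\<lambda>m y. if m = n \<and> y = x then g else 0)"

definition lstar :: "int \<Rightarrow> 'k \<Rightarrow> ('g \<Rightarrow> complex) \<Rightarrow> ((int \<Rightarrow> 'k \<Rightarrow> 'g) \<Rightarrow> complex)" where
  "lstar n x r = (\<lambda>f. r (f n x))"

definition Avert where
  "Avert K G dC dG n x r = (\<lambda>\<psi> f.
     (\<Sum>h\<in>G (n + 1). r h * Aop K G dC dG (dstar n x h) \<psi> f) / of_nat (card (G (n + 1))))"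

definition Bvert where
  "Bvert K G dC dG n x g = (\<lambda>\<psi> f.
     (\<Sum>\<rho>\<in>chars G (n - 1). \<rho> g * Bop K G dC dG (lstar n x \<rho>) \<psi> f) / of_nat (card (G (n - 1))))"

definition Ham where
  "Ham K G dC dG = (\<lambda>\<psi> f.
      - (\<Sum>n\<in>{n. K n \<noteq> {}}. \<Sum>x\<in>K n. Avert K G dC dG n x (\<lambda>_. 1) \<psi> f)
      - (\<Sum>n\<in>{n. K n \<noteq> {}}. \<Sum>y\<in>K n. Bvert K G dC dG n y 0 \<psi> f))"

end

theory Submission
  imports Defs
begin

text \<open>The Hamiltonian and the vertex operators are complex linear combinations of
  two kinds of generators: the translations \<open>A\<^sub>t = P\<^bsub>\<delta>t\<^esub>\<close> by coboundaries of
  \<open>(-1)\<close>-cochains \<open>t\<close>, and the multiplication operators \<open>B\<^sub>m = Q\<^bsub>m \<circ> \<delta>\<^esub>\<close>.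
  Translations commute with each other, multiplications commute with each other, and
  \<open>A\<^sub>t\<close> commutes with \<open>B\<^sub>m\<close> because \<open>\<delta>\<^sup>0 \<delta>\<^sup>-\<^sup>1 = 0\<close>: translating \<open>f\<close> by \<open>\<delta>t\<close> does not
  change \<open>\<delta>f\<close>, on which the weight of \<open>B\<^sub>m\<close> depends. As all these operators are linear,
  a linear operator commuting with every generator commutes with every linear
  combination of them; applied twice, this shows that \<open>H\<close> commutes with each generator and
  then with each \<open>A\<^sub>x\<^sup>r\<close> and \<open>B\<^sub>y\<^sup>g\<close>.\<close>

section \<open>Integer multiples\<close>

lemma zmul_zero [simp]: "zmul 0 a = 0"
  by (simp add: zmul_def)

lemma zmul_plus_one: "zmul (k + 1) a = zmul k a + a"
proof (cases "k \<ge> 0")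
  case True
  then have "nat (k + 1) = Suc (nat k)" by simp
  with True show ?thesis by (simp add: zmul_def)
next
  case False
  then consider "k = -1" | "nat (-k) = Suc (nat (-(k + 1)))" "k + 1 < 0" by linarith
  then show ?thesis
    by cases (use False in \<open>simp_all add: zmul_def\<close>)
qed

lemma zmul_minus_one: "zmul (k - 1) a = zmul k a - a"
  using zmul_plus_one[of "k - 1" a] by (simp add: algebra_simps)

lemma zmul_add_left: "zmul (k + l) a = zmul k a + zmul l a"
proof (induct l rule: int_induct[where k = 0])
  case (step1 i)
  then show ?case using zmul_plus_one[of "k + i" a] by (simp add: zmul_plus_one add.assoc)
next
  case (step2 i)
  then show ?case using zmul_minus_one[of "k + i" a] by (simp add: zmul_minus_one algebra_simps)
qed simp

lemma zmul_uminus_left: "zmul (- k) a = - zmul k a"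
  using zmul_add_left[of k "- k" a] by (simp add: eq_neg_iff_add_eq_0 add.commute)

lemma zmul_mult: "zmul (k * l) a = zmul k (zmul l a)"
proof (induct k rule: int_induct[where k = 0])
  case (step1 i)
  have "zmul ((i + 1) * l) a = zmul (i * l) a + zmul l a"
    by (simp add: distrib_right zmul_add_left)
  with step1 show ?case by (simp add: zmul_plus_one)
next
  case (step2 i)
  have "zmul ((i - 1) * l) a = zmul (i * l) a + zmul (- l) a"
    using zmul_add_left[of "i * l" "- l" a] by (simp add: left_diff_distrib)
  with step2 show ?case by (simp add: zmul_minus_one zmul_uminus_left)
qed simp

lemma zmul_zero_right [simp]: "zmul k 0 = 0"
  by (simp add: zmul_def)

lemma zmul_add_right: "zmul k (a + b) = zmul k a + zmul k b"
  by (induct k rule: int_induct[where k = 0])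
     (simp_all add: zmul_plus_one zmul_minus_one algebra_simps)

lemma zmul_diff_right: "zmul k (a - b) = zmul k a - zmul k b"
  by (induct k rule: int_induct[where k = 0])
     (simp_all add: zmul_plus_one zmul_minus_one algebra_simps)

lemma zmul_uminus_right: "zmul k (- a) = - zmul k a"
  using zmul_diff_right[of k 0 a] by simp

lemma zmul_sum_left: "zmul (\<Sum>i\<in>I. k i) a = (\<Sum>i\<in>I. zmul (k i) a)"
  by (induct I rule: infinite_finite_induct) (simp_all add: zmul_add_left)

lemma zmul_sum_right: "zmul k (\<Sum>i\<in>I. a i) = (\<Sum>i\<in>I. zmul k (a i))"
  by (induct I rule: infinite_finite_induct) (simp_all add: zmul_add_right)

section \<open>Additive subgroups and additive maps\<close>

definition add_subgroup :: "'g::ab_group_add set \<Rightarrow> bool" where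
  "add_subgroup S \<longleftrightarrow> 0 \<in> S \<and> (\<forall>a\<in>S. \<forall>b\<in>S. a + b \<in> S \<and> - a \<in> S)"

lemma add_subgroup_zero: "add_subgroup S \<Longrightarrow> 0 \<in> S"
  and add_subgroup_add: "add_subgroup S \<Longrightarrow> a \<in> S \<Longrightarrow> b \<in> S \<Longrightarrow> a + b \<in> S"
  and add_subgroup_uminus: "add_subgroup S \<Longrightarrow> a \<in> S \<Longrightarrow> - a \<in> S"
  by (simp_all add: add_subgroup_def)

lemma add_subgroup_diff: "add_subgroup S \<Longrightarrow> a \<in> S \<Longrightarrow> b \<in> S \<Longrightarrow> a - b \<in> S"
  using add_subgroup_add[of S a "- b"] add_subgroup_uminus[of S b] by simp

lemma add_subgroup_sum:
  "add_subgroup S \<Longrightarrow> (\<And>i. i \<in> I \<Longrightarrow> a i \<in> S) \<Longrightarrow> (\<Sum>i\<in>I. a i) \<in> S"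
  by (induct I rule: infinite_finite_induct) (simp_all add: add_subgroup_zero add_subgroup_add)

lemma add_subgroup_zmul: "add_subgroup S \<Longrightarrow> a \<in> S \<Longrightarrow> zmul k a \<in> S"
  by (induct k rule: int_induct[where k = 0])
     (simp_all add: zmul_plus_one zmul_minus_one add_subgroup_zero add_subgroup_add
        add_subgroup_diff)

definition additive_on :: "'a::ab_group_add set \<Rightarrow> ('a \<Rightarrow> 'b::ab_group_add) \<Rightarrow> bool" where
  "additive_on S h \<longleftrightarrow> (\<forall>a\<in>S. \<forall>b\<in>S. h (a + b) = h a + h b)"

context
  fixes S :: "'a::ab_group_add set" and h :: "'a \<Rightarrow> 'b::ab_group_add"
  assumes S: "add_subgroup S" and h: "additive_on S h"
begin

lemma additive_on_add: "a \<in> S \<Longrightarrow> b \<in> S \<Longrightarrow> h (a + b) = h a + h b"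
  using h by (simp add: additive_on_def)

lemma additive_on_zero: "h 0 = 0"
  using additive_on_add[OF add_subgroup_zero add_subgroup_zero, OF S S] by simp

lemma additive_on_diff: "a \<in> S \<Longrightarrow> b \<in> S \<Longrightarrow> h (a - b) = h a - h b"
  using additive_on_add[of "a - b" b] add_subgroup_diff[OF S] by (simp add: eq_diff_eq)

lemma additive_on_sum: "(\<And>i. i \<in> I \<Longrightarrow> a i \<in> S) \<Longrightarrow> h (\<Sum>i\<in>I. a i) = (\<Sum>i\<in>I. h (a i))"
proof (induct I rule: infinite_finite_induct)
  case (insert i I)
  then show ?case
    using additive_on_add[of "a i" "\<Sum>i\<in>I. a i"] add_subgroup_sum[OF S, of I a] by simp
qed (simp_all add: additive_on_zero)

lemma additive_on_zmul: "a \<in> S \<Longrightarrow> h (zmul k a) = zmul k (h a)"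
  by (induct k rule: int_induct[where k = 0])
     (simp_all add: zmul_plus_one zmul_minus_one additive_on_zero additive_on_add
        additive_on_diff add_subgroup_zmul[OF S])

lemma additive_on_zmul_sum:
  "(\<And>i. i \<in> I \<Longrightarrow> a i \<in> S) \<Longrightarrow> h (\<Sum>i\<in>I. zmul (k i) (a i)) = (\<Sum>i\<in>I. zmul (k i) (h (a i)))"
  by (simp add: additive_on_sum additive_on_zmul add_subgroup_zmul[OF S])

end

section \<open>Cochains and the coboundary map\<close>

lemma finite_chain_complex_subgroup: "finite_chain_complex G dG \<Longrightarrow> add_subgroup (G n)"
  and finite_chain_complex_additive: "finite_chain_complex G dG \<Longrightarrow> additive_on (G n) (dG n)"
  and finite_chain_complex_boundary_mem:
    "finite_chain_complex G dG \<Longrightarrow> a \<in> G n \<Longrightarrow> dG n a \<in> G (n - 1)"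
  and finite_chain_complex_boundary_boundary:
    "finite_chain_complex G dG \<Longrightarrow> a \<in> G n \<Longrightarrow> dG (n - 1) (dG n a) = 0"
  by (simp_all add: finite_chain_complex_def add_subgroup_def additive_on_def)

lemma free_chain_complex_zmul_boundary_boundary:
  assumes "free_chain_complex K dC" and "y \<in> K n"
  shows "(\<Sum>z\<in>K (n - 1). zmul (dC n y z) (\<Sum>w\<in>K (n - 2). zmul (dC (n - 1) z w) (a w))) = 0"
proof -
  have "(\<Sum>z\<in>K (n - 1). zmul (dC n y z) (\<Sum>w\<in>K (n - 2). zmul (dC (n - 1) z w) (a w)))
      = (\<Sum>w\<in>K (n - 2). zmul (\<Sum>z\<in>K (n - 1). dC n y z * dC (n - 1) z w) (a w))"
    by (simp add: zmul_sum_right zmul_sum_left zmul_mult sum.swap[where A = "K (n - 1)"])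
  also have "\<dots> = 0"
    using assms by (simp add: free_chain_complex_def)
  finally show ?thesis .
qed

lemma cochains_diff:
  assumes "finite_chain_complex G dG" and "f \<in> cochains K G p" and "s \<in> cochains K G p"
  shows "(\<lambda>n x. f n x - s n x) \<in> cochains K G p"
  using assms add_subgroup_diff[OF finite_chain_complex_subgroup[OF assms(1)]]
  by (simp add: cochains_def)

lemma dstar_cochains:
  assumes "finite_chain_complex G dG" and "x \<in> K n" and "h \<in> G (n - p)"
  shows "dstar n x h \<in> cochains K G p"
  using assms add_subgroup_zero[OF finite_chain_complex_subgroup] by (auto simp: cochains_def dstar_def)

lemma cobound_cochains:
  assumes fcc: "finite_chain_complex G dG" and f: "f \<in> cochains K G p"
  shows "cobound K dC dG p f \<in> cochains K G (p + 1)"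
  unfolding cochains_def
proof (intro CollectI allI conjI impI)
  fix n x assume x: "x \<in> K n"
  note S = finite_chain_complex_subgroup[OF fcc, of "n - 1 - p"]
  have "(\<Sum>y\<in>K (n - 1). zmul (dC n x y) (f (n - 1) y)) \<in> G (n - 1 - p)"
    using f by (intro add_subgroup_sum[OF S] add_subgroup_zmul[OF S]) (simp add: cochains_def)
  moreover have "dG (n - p) (f n x) \<in> G (n - 1 - p)"
    using finite_chain_complex_boundary_mem[OF fcc, of "f n x" "n - p"] f x
    by (simp add: cochains_def diff_diff_eq add.commute)
  ultimately show "cobound K dC dG p f n x \<in> G (n - (p + 1))"
    using x add_subgroup_diff[OF S] add_subgroup_uminus[OF S]
    by (simp add: cobound_def diff_diff_eq add.commute)
qed (simp add: cobound_def)

lemma cobound_diff: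
  assumes fcc: "finite_chain_complex G dG" and f: "f \<in> cochains K G p" and s: "s \<in> cochains K G p"
  shows "cobound K dC dG p (\<lambda>n x. f n x - s n x)
       = (\<lambda>n x. cobound K dC dG p f n x - cobound K dC dG p s n x)"
proof (intro ext)
  fix n x
  show "cobound K dC dG p (\<lambda>n x. f n x - s n x) n x = cobound K dC dG p f n x - cobound K dC dG p s n x"
  proof (cases "x \<in> K n")
    case True
    then have "dG (n - p) (f n x - s n x) = dG (n - p) (f n x) - dG (n - p) (s n x)"
      using f s additive_on_diff[OF finite_chain_complex_subgroup finite_chain_complex_additive, OF fcc fcc]
      by (simp add: cochains_def)
    with True show ?thesis by (simp add: cobound_def zmul_diff_right sum_subtractf)
  qed (simp add: cobound_def)
qed

lemma cobound_cobound:
  assumes fc: "free_chain_complex K dC" and fcc: "finite_chain_complex G dG"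
    and t: "t \<in> cochains K G p"
  shows "cobound K dC dG (p + 1) (cobound K dC dG p t) = (\<lambda>n x. 0)"
proof (intro ext)
  fix n y
  define s where "s = cobound K dC dG p t"
  show "cobound K dC dG (p + 1) (cobound K dC dG p t) n y = 0"
  proof (cases "y \<in> K n")
    case True
    note S = finite_chain_complex_subgroup[OF fcc, of "n - 1 - p"]
      and dG = finite_chain_complex_additive[OF fcc, of "n - 1 - p"]
    have tm: "\<And>m z. z \<in> K m \<Longrightarrow> t m z \<in> G (m - p)"
      using t by (simp add: cochains_def)
    define A where "A z = (\<Sum>w\<in>K (n - 2). zmul (dC (n - 1) z w) (t (n - 2) w))" for z
    define D where "D z = dG (n - 1 - p) (t (n - 1) z)" for z
    define B where "B = (\<Sum>z\<in>K (n - 1). zmul (dC n y z) (t (n - 1) z))"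
    define E where "E = dG (n - p) (t n y)"
    have B: "B \<in> G (n - 1 - p)" and dB: "dG (n - 1 - p) B = (\<Sum>z\<in>K (n - 1). zmul (dC n y z) (D z))"
      using tm[of _ "n - 1"] unfolding B_def D_def
      by (auto intro!: add_subgroup_sum[OF S] add_subgroup_zmul[OF S] additive_on_zmul_sum[OF S dG])
    have E: "E \<in> G (n - 1 - p)" and dE: "dG (n - 1 - p) E = 0"
      using finite_chain_complex_boundary_mem[OF fcc tm[OF True]]
        finite_chain_complex_boundary_boundary[OF fcc tm[OF True]]
      unfolding E_def by (simp_all add: algebra_simps)
    have A: "(\<Sum>z\<in>K (n - 1). zmul (dC n y z) (A z)) = 0"
      unfolding A_def by (rule free_chain_complex_zmul_boundary_boundary[OF fc True])
    have s_lower: "s (n - 1) z = A z - (if even p then D z else - D z)" if "z \<in> K (n - 1)" for z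
      using that by (simp add: s_def cobound_def A_def D_def)
    have s_top: "s n y = B - (if even p then E else - E)"
      using True by (simp add: s_def cobound_def B_def E_def)
    have "cobound K dC dG (p + 1) s n y
        = (\<Sum>z\<in>K (n - 1). zmul (dC n y z) (A z - (if even p then D z else - D z)))
          - (if even p then - dG (n - 1 - p) (s n y) else dG (n - 1 - p) (s n y))"
      using True s_lower by (simp add: cobound_def diff_diff_eq add.commute cong: sum.cong)
    also have "\<dots> = 0"
      using A dB dE additive_on_add[OF S dG B E] additive_on_diff[OF S dG B E]
      by (cases "even p") (simp_all add: s_top zmul_add_right zmul_diff_right zmul_uminus_right
          sum.distrib sum_subtractf)
    finally show ?thesis
      unfolding s_def .
  qed (simp add: cobound_def)
qed

section \<open>Operators on the Hilbert space\<close>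

type_synonym 'a operator = "('a \<Rightarrow> complex) \<Rightarrow> ('a \<Rightarrow> complex)"

definition weighted_subst :: "'a set \<Rightarrow> ('a \<Rightarrow> complex) \<Rightarrow> ('a \<Rightarrow> 'a) \<Rightarrow> 'a operator" where
  "weighted_subst C w \<sigma> \<phi> = (\<lambda>f. if f \<in> C then w f * \<phi> (\<sigma> f) else 0)"

definition linear_op :: "'a operator \<Rightarrow> bool" where
  "linear_op X \<longleftrightarrow> (\<forall>\<phi> \<psi>. X (\<lambda>f. \<phi> f + \<psi> f) = (\<lambda>f. X \<phi> f + X \<psi> f))
                   \<and> (\<forall>c \<phi>. X (\<lambda>f. c * \<phi> f) = (\<lambda>f. c * X \<phi> f))"

definition commute_op :: "'a operator \<Rightarrow> 'a operator \<Rightarrow> bool" where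
  "commute_op X Y \<longleftrightarrow> (\<forall>\<phi>. X (Y \<phi>) = Y (X \<phi>))"

context
  fixes X :: "'a operator"
  assumes X: "linear_op X"
begin

lemma linear_op_add_apply: "X (\<lambda>f. \<phi> f + \<psi> f) = (\<lambda>f. X \<phi> f + X \<psi> f)"
  and linear_op_scale_apply: "X (\<lambda>f. c * \<phi> f) = (\<lambda>f. c * X \<phi> f)"
  using X by (simp_all add: linear_op_def)

lemma linear_op_zero_apply: "X (\<lambda>f. 0) = (\<lambda>f. 0)"
  using linear_op_scale_apply[of 0 "\<lambda>f. 0"] by simp

lemma linear_op_uminus_apply: "X (\<lambda>f. - \<phi> f) = (\<lambda>f. - X \<phi> f)"
  using linear_op_scale_apply[of "-1" \<phi>] by simp

lemma linear_op_diff_apply: "X (\<lambda>f. \<phi> f - \<psi> f) = (\<lambda>f. X \<phi> f - X \<psi> f)"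
  using linear_op_add_apply[of \<phi> "\<lambda>f. - \<psi> f"] linear_op_uminus_apply[of \<psi>] by simp

lemma linear_op_divide_apply: "X (\<lambda>f. \<phi> f / c) = (\<lambda>f. X \<phi> f / c)"
  using linear_op_scale_apply[of "inverse c" \<phi>] by (simp add: divide_inverse mult.commute)

lemma linear_op_sum_apply: "X (\<lambda>f. \<Sum>i\<in>I. \<phi> i f) = (\<lambda>f. \<Sum>i\<in>I. X (\<phi> i) f)"
  by (induct I rule: infinite_finite_induct)
     (simp_all add: linear_op_zero_apply linear_op_add_apply)

lemma linear_op_scale: "linear_op (\<lambda>\<phi> f. c * X \<phi> f)"
  and linear_op_divide: "linear_op (\<lambda>\<phi> f. X \<phi> f / c)"
  and linear_op_uminus: "linear_op (\<lambda>\<phi> f. - X \<phi> f)"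
  using X by (simp_all add: linear_op_def fun_eq_iff algebra_simps add_divide_distrib)

lemma commute_op_scale: "commute_op X Y \<Longrightarrow> commute_op X (\<lambda>\<phi> f. c * Y \<phi> f)"
  and commute_op_divide: "commute_op X Y \<Longrightarrow> commute_op X (\<lambda>\<phi> f. Y \<phi> f / c)"
  and commute_op_uminus: "commute_op X Y \<Longrightarrow> commute_op X (\<lambda>\<phi> f. - Y \<phi> f)"
  and commute_op_diff: "commute_op X Y \<Longrightarrow> commute_op X Z \<Longrightarrow> commute_op X (\<lambda>\<phi> f. Y \<phi> f - Z \<phi> f)"
  by (simp_all add: commute_op_def linear_op_scale_apply linear_op_divide_apply
      linear_op_uminus_apply linear_op_diff_apply)

lemma commute_op_sum:
  "(\<And>i. i \<in> I \<Longrightarrow> commute_op X (Y i)) \<Longrightarrow> commute_op X (\<lambda>\<phi> f. \<Sum>i\<in>I. Y i \<phi> f)"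
  by (simp add: commute_op_def linear_op_sum_apply)

end

lemma linear_op_sum: "(\<And>i. i \<in> I \<Longrightarrow> linear_op (X i)) \<Longrightarrow> linear_op (\<lambda>\<phi> f. \<Sum>i\<in>I. X i \<phi> f)"
  by (simp add: linear_op_def fun_eq_iff sum.distrib sum_distrib_left cong: sum.cong)

lemma linear_op_diff: "linear_op X \<Longrightarrow> linear_op Y \<Longrightarrow> linear_op (\<lambda>\<phi> f. X \<phi> f - Y \<phi> f)"
  by (simp add: linear_op_def fun_eq_iff algebra_simps)

lemma commute_op_sym: "commute_op X Y \<Longrightarrow> commute_op Y X"
  by (simp add: commute_op_def)

lemma linear_op_weighted_subst: "linear_op (weighted_subst C w \<sigma>)"
  by (simp add: linear_op_def weighted_subst_def fun_eq_iff algebra_simps)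

lemma commute_op_weighted_subst:
  assumes "\<And>f. f \<in> C \<Longrightarrow> \<sigma> f \<in> C \<and> \<tau> f \<in> C \<and> \<sigma> (\<tau> f) = \<tau> (\<sigma> f)
                          \<and> v f * w (\<sigma> f) = w f * v (\<tau> f)"
  shows "commute_op (weighted_subst C v \<sigma>) (weighted_subst C w \<tau>)"
  using assms by (simp add: commute_op_def weighted_subst_def fun_eq_iff mult.assoc)

lemma Aop_eq_weighted_subst:
  "Aop K G dC dG t = weighted_subst (cochains K G 0) (\<lambda>_. 1) (\<lambda>f n x. f n x - cobound K dC dG (-1) t n x)"
  by (simp add: Aop_def Pop_def weighted_subst_def fun_eq_iff)

lemma Bop_eq_weighted_subst:
  "Bop K G dC dG m = weighted_subst (cochains K G 0) (\<lambda>f. m (cobound K dC dG 0 f)) (\<lambda>f. f)"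
  by (simp add: Bop_def Qop_def weighted_subst_def fun_eq_iff)

lemma linear_op_Aop: "linear_op (Aop K G dC dG t)"
  and linear_op_Bop: "linear_op (Bop K G dC dG m)"
  by (simp_all add: Aop_eq_weighted_subst Bop_eq_weighted_subst linear_op_weighted_subst)

lemma linear_op_Ham: "linear_op (Ham K G dC dG)"
  unfolding Ham_def Avert_def Bvert_def
  by (intro linear_op_diff linear_op_uminus linear_op_sum linear_op_divide linear_op_scale
      linear_op_Aop linear_op_Bop)

lemma commute_op_Aop_Aop:
  assumes fcc: "finite_chain_complex G dG" and "t \<in> cochains K G (-1)" and "t' \<in> cochains K G (-1)"
  shows "commute_op (Aop K G dC dG t) (Aop K G dC dG t')"
  unfolding Aop_eq_weighted_subst
proof (rule commute_op_weighted_subst, intro conjI)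
  fix f assume "f \<in> cochains K G 0"
  moreover have "cobound K dC dG (-1) t \<in> cochains K G 0" "cobound K dC dG (-1) t' \<in> cochains K G 0"
    using cobound_cochains[OF fcc] assms(2,3) by fastforce+
  ultimately show "(\<lambda>n x. f n x - cobound K dC dG (-1) t n x) \<in> cochains K G 0"
    and "(\<lambda>n x. f n x - cobound K dC dG (-1) t' n x) \<in> cochains K G 0"
    by (simp_all add: cochains_diff[OF fcc])
qed (simp_all add: algebra_simps)

lemma commute_op_Aop_Bop:
  assumes fc: "free_chain_complex K dC" and fcc: "finite_chain_complex G dG"
    and t: "t \<in> cochains K G (-1)"
  shows "commute_op (Aop K G dC dG t) (Bop K G dC dG m)"
  unfolding Aop_eq_weighted_subst Bop_eq_weighted_subst
proof (rule commute_op_weighted_subst, intro conjI)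
  fix f assume f: "f \<in> cochains K G 0"
  have dt: "cobound K dC dG (-1) t \<in> cochains K G 0"
    using cobound_cochains[OF fcc t] by simp
  show "(\<lambda>n x. f n x - cobound K dC dG (-1) t n x) \<in> cochains K G 0"
    by (rule cochains_diff[OF fcc f dt])
  have "cobound K dC dG 0 (cobound K dC dG (-1) t) = (\<lambda>n x. 0)"
    using cobound_cobound[OF fc fcc t] by simp
  then have "cobound K dC dG 0 (\<lambda>n x. f n x - cobound K dC dG (-1) t n x) = cobound K dC dG 0 f"
    by (simp add: cobound_diff[OF fcc f dt])
  then show "1 * m (cobound K dC dG 0 (\<lambda>n x. f n x - cobound K dC dG (-1) t n x))
      = m (cobound K dC dG 0 f) * 1"
    by simp
qed simp_all

lemma commute_op_Bop_Bop: "commute_op (Bop K G dC dG m) (Bop K G dC dG m')"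
  unfolding Bop_eq_weighted_subst by (rule commute_op_weighted_subst) simp

definition generator_ops ::
    "(int \<Rightarrow> 'k set) \<Rightarrow> (int \<Rightarrow> 'g::ab_group_add set) \<Rightarrow> (int \<Rightarrow> 'k \<Rightarrow> 'k \<Rightarrow> int)
     \<Rightarrow> (int \<Rightarrow> 'g \<Rightarrow> 'g) \<Rightarrow> (int \<Rightarrow> 'k \<Rightarrow> 'g) operator set" where
  "generator_ops K G dC dG = Aop K G dC dG ` cochains K G (-1) \<union> range (Bop K G dC dG)"

lemma linear_op_generator_ops: "X \<in> generator_ops K G dC dG \<Longrightarrow> linear_op X"
  by (auto simp: generator_ops_def linear_op_Aop linear_op_Bop)

lemma commute_op_generator_ops:
  assumes "free_chain_complex K dC" and "finite_chain_complex G dG"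
    and "X \<in> generator_ops K G dC dG" and "Y \<in> generator_ops K G dC dG"
  shows "commute_op X Y"
  using assms commute_op_Aop_Aop commute_op_Aop_Bop commute_op_Bop_Bop
    commute_op_sym[OF commute_op_Aop_Bop]
  by (auto simp: generator_ops_def)

context
  fixes K :: "int \<Rightarrow> 'k set" and G :: "int \<Rightarrow> 'g::ab_group_add set"
    and dC :: "int \<Rightarrow> 'k \<Rightarrow> 'k \<Rightarrow> int" and dG :: "int \<Rightarrow> 'g \<Rightarrow> 'g"
    and X :: "(int \<Rightarrow> 'k \<Rightarrow> 'g) operator"
  assumes fcc: "finite_chain_complex G dG" and X: "linear_op X"
    and commute: "\<And>Y. Y \<in> generator_ops K G dC dG \<Longrightarrow> commute_op X Y"
begin

lemma commute_op_Avert: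
  assumes "x \<in> K n"
  shows "commute_op X (Avert K G dC dG n x r)"
proof -
  have "dstar n x h \<in> cochains K G (-1)" if "h \<in> G (n + 1)" for h
    using dstar_cochains[of G dG x K n h "-1"] fcc assms that by simp
  then show ?thesis
    unfolding Avert_def
    by (intro commute_op_divide commute_op_sum commute_op_scale X commute)
       (simp add: generator_ops_def)
qed

lemma commute_op_Bvert: "commute_op X (Bvert K G dC dG m y g)"
  unfolding Bvert_def
  by (intro commute_op_divide commute_op_sum commute_op_scale X commute)
     (simp add: generator_ops_def)

lemma commute_op_Ham: "commute_op X (Ham K G dC dG)"
  unfolding Ham_def
  by (intro commute_op_diff commute_op_uminus commute_op_sum X commute_op_Avert commute_op_Bvert)

end

theorem lemma6:
  fixes K :: "int \<Rightarrow> 'k set" and dC :: "int \<Rightarrow> 'k \<Rightarrow> 'k \<Rightarrow> int"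
    and G :: "int \<Rightarrow> 'g::ab_group_add set" and dG :: "int \<Rightarrow> 'g \<Rightarrow> 'g"
  assumes "free_chain_complex K dC" and "finite_chain_complex G dG"
  shows "(\<forall>n x r. x \<in> K n \<longrightarrow> r \<in> chars G (n + 1) \<longrightarrow>
            (\<forall>\<psi>\<in>hilb K G. Ham K G dC dG (Avert K G dC dG n x r \<psi>)
                           = Avert K G dC dG n x r (Ham K G dC dG \<psi>)))
       \<and> (\<forall>m y g. y \<in> K m \<longrightarrow> g \<in> G (m - 1) \<longrightarrow>
            (\<forall>\<psi>\<in>hilb K G. Ham K G dC dG (Bvert K G dC dG m y g \<psi>)
                           = Bvert K G dC dG m y g (Ham K G dC dG \<psi>)))"
proof -
  have Ham_generators: "commute_op (Ham K G dC dG) Y" if "Y \<in> generator_ops K G dC dG" for Y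
    using commute_op_Ham[OF assms(2) linear_op_generator_ops[OF that]]
      commute_op_generator_ops[OF assms that]
    by (blast intro: commute_op_sym)
  have "commute_op (Ham K G dC dG) (Avert K G dC dG n x r)" if "x \<in> K n" for n x r
    using assms(2) linear_op_Ham Ham_generators that by (rule commute_op_Avert)
  moreover have "commute_op (Ham K G dC dG) (Bvert K G dC dG m y g)" for m y g
    using assms(2) linear_op_Ham Ham_generators by (rule commute_op_Bvert)
  ultimately show ?thesis
    by (simp add: commute_op_def)
qed

end
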